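(* Let $\alpha,\beta$ be real (or complex) parameters and let $n,k$ be non-negative integers. Let $\Omega_{n,k}$ be the set of all partitions of $\{1,\ldots,n\}$ into $k$ non-empty blocks, the blocks being unordered among themselves but each block being arranged as a linear list (sequence). For $\varepsilon\in\Omega_{n,k}$ define its weight $w(\varepsilon)$ as the product over all elements $e\in\{1,\ldots,n\}$ of the weight of $e$, where an element $e$ has weight $1$ if $e$ is the smallest element of its list, weight $\beta$ if $e$ is not the smallest element of its list but appears in the list before every element of its list that is smaller than $e$, and weight $\alpha$ otherwise. (Equivalently, the lists are built by inserting $1,2,\ldots,n$ one at a time: starting a new list costs $1$, inserting at the head of an existing list costs $\beta$, inserting immediately after an already placed element costs $\alpha$.) Then $$\genfrac{\lfloor}{\rfloor}{0pt}{}{n}{k}^{\alpha,\beta}=\sum_{\varepsilon\in\Omega_{n,k}} w(\varepsilon).$$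
   Context: For parameters $\alpha,\beta$, the generalized Stirling (Lah-type) numbers $\genfrac{\lfloor}{\rfloor}{0pt}{}{n}{k}^{\alpha,\beta}$, $0\le k\le n$, are defined by the polynomial identity in $x$ $$x(x+\alpha)(x+2\alpha)\cdots(x+(n-1)\alpha)=\sum_{k=0}^{n}\genfrac{\lfloor}{\rfloor}{0pt}{}{n}{k}^{\alpha,\beta}\,x(x-\beta)(x-2\beta)\cdots(x-(k-1)\beta),$$ (empty products equal $1$), and $\genfrac{\lfloor}{\rfloor}{0pt}{}{n}{k}^{\alpha,\beta}=0$ for $k<0$ or $k>n$. In particular $\genfrac{\lfloor}{\rfloor}{0pt}{}{0}{0}^{\alpha,\beta}=1$ and $\genfrac{\lfloor}{\rfloor}{0pt}{}{n}{0}^{\alpha,\beta}=0$ for $n\ge1$. *)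

theory Defs
  imports Complex_Main
begin

definition rising_prod :: "complex \<Rightarrow> nat \<Rightarrow> complex \<Rightarrow> complex" where
  "rising_prod a n x = (\<Prod>i<n. x + of_nat i * a)"

definition falling_prod :: "complex \<Rightarrow> nat \<Rightarrow> complex \<Rightarrow> complex" where
  "falling_prod b k x = (\<Prod>i<k. x - of_nat i * b)"

definition gen_stirling :: "complex \<Rightarrow> complex \<Rightarrow> nat \<Rightarrow> nat \<Rightarrow> complex" where
  "gen_stirling a b n k =
     (if k \<le> n then
        (THE c :: nat \<Rightarrow> complex.
            (\<forall>x. rising_prod a n x = (\<Sum>j\<le>n. c j * falling_prod b j x)) \<and>
            (\<forall>j>n. c j = 0)) k
      else 0)"

text \<open>Partitions of {1..n} into k nonempty blocks, each block a linear list
  (a set of lists; the lists are unordered among themselves).\<close>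
definition Omega :: "nat \<Rightarrow> nat \<Rightarrow> nat list set set" where
  "Omega n k = {L. finite L \<and> card L = k \<and>
      (\<forall>l\<in>L. l \<noteq> [] \<and> distinct l) \<and>
      (\<forall>l\<in>L. \<forall>m\<in>L. l \<noteq> m \<longrightarrow> set l \<inter> set m = {}) \<and>
      (\<Union>l\<in>L. set l) = {1..n}}"

definition elem_weight :: "complex \<Rightarrow> complex \<Rightarrow> nat list \<Rightarrow> nat \<Rightarrow> complex" where
  "elem_weight a b l i =
     (if l ! i = Min (set l) then 1
      else if (\<forall>j<i. l ! i < l ! j) then b
      else a)"

definition weight :: "complex \<Rightarrow> complex \<Rightarrow> nat list set \<Rightarrow> complex" where
  "weight a b L = (\<Prod>l\<in>L. \<Prod>i<length l. elem_weight a b l i)"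

end

theory Submission
  imports Defs "HOL-Computational_Algebra.Polynomial"
begin

text \<open>Both sides satisfy the recurrence
  \<open>S (n+1) (k+1) = S n k + ((k+1)\<beta> + n\<alpha>) S n (k+1)\<close> with the same initial values.
  For the Stirling numbers, multiply the expansion of the rising product by
  \<open>x + n\<alpha> = (x - j\<beta>) + (j\<beta> + n\<alpha>)\<close>; the coefficients are unique because the falling
  products have distinct degrees. For the partitions, the largest element \<open>n+1\<close> is either a
  singleton block (weight \<open>1\<close>) or is inserted into one of the \<open>k+1\<close> blocks of a partition of
  \<open>{1..n}\<close>, at the head (weight \<open>\<beta>\<close>, \<open>k+1\<close> slots) or right after one of the \<open>n\<close> elements
  (weight \<open>\<alpha>\<close>); being larger than everything, it changes no other weight.\<close>

definition falling_poly :: "complex \<Rightarrow> nat \<Rightarrow> complex poly" where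
  "falling_poly b j = (\<Prod>i<j. [:- of_nat i * b, 1:])"

lemma poly_falling_poly: "poly (falling_poly b j) x = falling_prod b j x"
  by (simp add: falling_poly_def falling_prod_def poly_prod)

lemma degree_falling_poly: "degree (falling_poly b j) = j"
  unfolding falling_poly_def by (subst degree_prod_sum_eq) simp_all

lemma coeff_falling_poly_top: "coeff (falling_poly b j) j = 1"
proof -
  have "lead_coeff (falling_poly b j) = 1"
    unfolding falling_poly_def lead_coeff_prod by simp
  then show ?thesis
    by (simp add: degree_falling_poly)
qed

lemma falling_prod_coeffs_eq_0:
  assumes "\<And>x. (\<Sum>j\<le>n. c j * falling_prod b j x) = 0" and "j \<le> n"
  shows "c j = 0"
  using assms
proof (induction n arbitrary: j)
  case 0
  then show ?case by (simp add: falling_prod_def)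
next
  case (Suc n)
  let ?p = "\<Sum>j\<le>Suc n. smult (c j) (falling_poly b j)"
  have "poly ?p = (\<lambda>_. 0)"
    using Suc.prems(1) by (simp add: poly_sum poly_falling_poly fun_eq_iff)
  then have "?p = 0"
    by (metis poly_all_0_iff_0)
  \<comment> \<open>Only the top falling product reaches degree \<open>Suc n\<close>.\<close>
  moreover have "coeff ?p (Suc n) = c (Suc n)"
    by (simp add: coeff_sum coeff_eq_0 degree_falling_poly coeff_falling_poly_top)
  ultimately have top: "c (Suc n) = 0"
    by simp
  have "\<And>x. (\<Sum>j\<le>n. c j * falling_prod b j x) = 0"
    using Suc.prems(1) top by simp
  with Suc show ?case
    by (cases "j = Suc n") (auto simp: top)
qed

fun gen_stirling_rec :: "complex \<Rightarrow> complex \<Rightarrow> nat \<Rightarrow> nat \<Rightarrow> complex" where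
  "gen_stirling_rec a b 0 k = (if k = 0 then 1 else 0)"
| "gen_stirling_rec a b (Suc n) 0 = 0"
| "gen_stirling_rec a b (Suc n) (Suc k) =
     gen_stirling_rec a b n k + (of_nat (Suc k) * b + of_nat n * a) * gen_stirling_rec a b n (Suc k)"

lemma gen_stirling_rec_eq_0: "n < k \<Longrightarrow> gen_stirling_rec a b n k = 0"
  by (induction a b n k rule: gen_stirling_rec.induct) auto

lemma rising_prod_eq_sum_gen_stirling_rec:
  "rising_prod a n x = (\<Sum>j\<le>n. gen_stirling_rec a b n j * falling_prod b j x)"
proof (induction n)
  case 0
  then show ?case by (simp add: rising_prod_def falling_prod_def)
next
  case (Suc n)
  let ?S = "gen_stirling_rec a b n" and ?f = "\<lambda>j. falling_prod b j x"
  let ?c = "\<lambda>j. of_nat j * b + of_nat n * a"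
  \<comment> \<open>\<open>x + n a = (x - j b) + (j b + n a)\<close> raises \<open>?f j\<close> to \<open>?f (Suc j)\<close> plus a multiple of \<open>?f j\<close>.\<close>
  have "rising_prod a (Suc n) x = (\<Sum>j\<le>n. ?S j * ?f j) * (x + of_nat n * a)"
    by (simp add: rising_prod_def Suc[symmetric])
  also have "\<dots> = (\<Sum>j\<le>n. ?S j * ?f (Suc j)) + (\<Sum>j\<le>n. ?c j * ?S j * ?f j)"
    unfolding sum_distrib_right sum.distrib[symmetric]
    by (rule sum.cong) (simp_all add: falling_prod_def algebra_simps)
  also have "(\<Sum>j\<le>n. ?c j * ?S j * ?f j) = (\<Sum>j\<le>Suc n. ?c j * ?S j * ?f j)"
    by (simp add: gen_stirling_rec_eq_0)
  also have "\<dots> = (\<Sum>j\<le>n. ?c (Suc j) * ?S (Suc j) * ?f (Suc j))"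
    unfolding sum.atMost_Suc_shift by (cases n) auto
  also have "(\<Sum>j\<le>n. ?S j * ?f (Suc j)) + \<dots> = (\<Sum>j\<le>Suc n. gen_stirling_rec a b (Suc n) j * ?f j)"
    unfolding sum.atMost_Suc_shift by (simp add: sum.distrib[symmetric] algebra_simps)
  finally show ?case .
qed

lemma gen_stirling_eq_rec: "gen_stirling a b n k = gen_stirling_rec a b n k"
proof -
  let ?P = "\<lambda>c :: nat \<Rightarrow> complex. (\<forall>x. rising_prod a n x = (\<Sum>j\<le>n. c j * falling_prod b j x)) \<and>
                                  (\<forall>j>n. c j = 0)"
  have "(THE c. ?P c) = gen_stirling_rec a b n"
  proof (rule the_equality)
    show "?P (gen_stirling_rec a b n)"
      using rising_prod_eq_sum_gen_stirling_rec gen_stirling_rec_eq_0 by auto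
  next
    fix c assume c: "?P c"
    have "\<And>x. (\<Sum>j\<le>n. (c j - gen_stirling_rec a b n j) * falling_prod b j x) = 0"
      using c rising_prod_eq_sum_gen_stirling_rec[of a n _ b]
      by (simp add: algebra_simps sum_subtractf)
    then have "\<And>j. j \<le> n \<Longrightarrow> c j = gen_stirling_rec a b n j"
      using falling_prod_coeffs_eq_0 by fastforce
    with c show "c = gen_stirling_rec a b n"
      using gen_stirling_rec_eq_0 by (metis ext not_le)
  qed
  then show ?thesis
    by (simp add: gen_stirling_def gen_stirling_rec_eq_0)
qed

definition list_weight :: "complex \<Rightarrow> complex \<Rightarrow> nat list \<Rightarrow> complex" where
  "list_weight a b l = (\<Prod>i<length l. elem_weight a b l i)"

lemma weight_eq_prod_list_weight: "weight a b L = (\<Prod>l\<in>L. list_weight a b l)"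
  by (simp add: weight_def list_weight_def)

lemma list_weight_singleton: "list_weight a b [x] = 1"
  by (simp add: list_weight_def elem_weight_def)

text \<open>The weight of an entry \<open>x\<close> of a list with minimum \<open>m\<close> depends only on the entries \<open>us\<close>
  preceding it; this makes the weight of a list a left-to-right fold.\<close>

definition entry_weight :: "complex \<Rightarrow> complex \<Rightarrow> nat \<Rightarrow> nat list \<Rightarrow> nat \<Rightarrow> complex" where
  "entry_weight a b m us x = (if x = m then 1 else if \<forall>y\<in>set us. x < y then b else a)"

fun entries_weight :: "complex \<Rightarrow> complex \<Rightarrow> nat \<Rightarrow> nat list \<Rightarrow> nat list \<Rightarrow> complex" where
  "entries_weight a b m us [] = 1"
| "entries_weight a b m us (x # vs) = entry_weight a b m us x * entries_weight a b m (us @ [x]) vs"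

lemma elem_weight_eq_entry_weight:
  assumes "i < length l"
  shows "elem_weight a b l i = entry_weight a b (Min (set l)) (take i l) (l ! i)"
proof -
  have "(\<forall>j<i. l ! i < l ! j) \<longleftrightarrow> (\<forall>y\<in>set (take i l). l ! i < y)"
    using assms by (auto simp: set_conv_nth)
  then show ?thesis
    by (simp add: elem_weight_def entry_weight_def)
qed

lemma prod_entry_weight_eq_entries_weight:
  "(\<Prod>i<length vs. entry_weight a b m (us @ take i vs) (vs ! i)) = entries_weight a b m us vs"
proof (induction vs arbitrary: us)
  case Nil
  then show ?case by simp
next
  case (Cons x vs)
  then show ?case
    using Cons.IH[of "us @ [x]"] by (simp add: prod.lessThan_Suc_shift del: prod.lessThan_Suc)
qed

lemma list_weight_eq_entries_weight: "list_weight a b l = entries_weight a b (Min (set l)) [] l"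
  using prod_entry_weight_eq_entries_weight[of a b "Min (set l)" "[]" l]
  by (simp add: list_weight_def elem_weight_eq_entry_weight)

lemma entries_weight_append:
  "entries_weight a b m us (xs @ ys) = entries_weight a b m us xs * entries_weight a b m (us @ xs) ys"
  by (induction xs arbitrary: us) auto

lemma entries_weight_insert_larger:
  assumes "set us' = insert N (set us)" and "\<forall>x\<in>set ys. x < N"
  shows "entries_weight a b m us' ys = entries_weight a b m us ys"
  using assms
proof (induction ys arbitrary: us us')
  case Nil
  then show ?case by simp
next
  case (Cons x ys)
  then have "entry_weight a b m us' x = entry_weight a b m us x"
    by (auto simp: entry_weight_def)
  moreover have "entries_weight a b m (us' @ [x]) ys = entries_weight a b m (us @ [x]) ys"
    using Cons by (intro Cons.IH) auto
  ultimately show ?case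
    by simp
qed

definition insert_at :: "nat \<Rightarrow> 'a \<Rightarrow> 'a list \<Rightarrow> 'a list" where
  "insert_at p x l = take p l @ x # drop p l"

lemma set_insert_at: "set (insert_at p x l) = insert x (set l)"
  unfolding insert_at_def by (metis Un_insert_right append_take_drop_id list.simps(15) set_append)

lemma length_insert_at: "p \<le> length l \<Longrightarrow> length (insert_at p x l) = Suc (length l)"
  by (simp add: insert_at_def)

lemma distinct_insert_at: "distinct l \<Longrightarrow> x \<notin> set l \<Longrightarrow> distinct (insert_at p x l)"
  using set_take_disj_set_drop_if_distinct[of l p p]
  by (auto simp: insert_at_def dest: in_set_takeD in_set_dropD)

lemma insert_at_inj:
  assumes "insert_at p x l = insert_at q x l'" and "x \<notin> set l" "x \<notin> set l'"
    and "p \<le> length l" "q \<le> length l'"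
  shows "p = q \<and> l = l'"
proof -
  have "x \<notin> set (take p l)" "x \<notin> set (drop p l)"
    using assms(2) by (auto dest: in_set_takeD in_set_dropD)
  with assms(1) have "take p l = take q l' \<and> drop p l = drop q l'"
    by (simp add: insert_at_def append_Cons_eq_iff)
  then show ?thesis
    using assms(4,5) by (metis append_take_drop_id length_take min_absorb2)
qed

lemma list_weight_insert_at_max:
  assumes "\<forall>x\<in>set l. x < N" "l \<noteq> []" "p \<le> length l"
  shows "list_weight a b (insert_at p N l) = (if p = 0 then b else a) * list_weight a b l"
proof -
  have Min_l: "Min (set l) < N"
    using assms by simp
  then have Min_ins: "Min (set (insert_at p N l)) = Min (set l)"
    using assms(2) by (simp add: set_insert_at)
  \<comment> \<open>\<open>N\<close> exceeds every entry, so it is a left-to-right minimum exactly at the head.\<close>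
  have new_entry: "entry_weight a b (Min (set l)) (take p l) N = (if p = 0 then b else a)"
  proof (cases "p = 0")
    case False
    then have "l ! 0 \<in> set (take p l)"
      using assms by (cases l; cases p) auto
    then have "\<not> (\<forall>y\<in>set (take p l). N < y)"
      using assms(1) by (meson in_set_takeD less_asym)
    with False Min_l show ?thesis
      by (auto simp: entry_weight_def)
  qed (use Min_l in \<open>simp add: entry_weight_def\<close>)
  let ?W = "entries_weight a b (Min (set l))"
  have "?W [] (insert_at p N l) = ?W [] (take p l) * (?W (take p l) [N] * ?W (take p l @ [N]) (drop p l))"
    unfolding insert_at_def using entries_weight_append[of a b _ "[]" "take p l" "N # drop p l"] by simp
  also have "?W (take p l @ [N]) (drop p l) = ?W (take p l) (drop p l)"
    using assms(1) by (intro entries_weight_insert_larger) (auto dest: in_set_dropD)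
  also have "?W [] (take p l) * (?W (take p l) [N] * ?W (take p l) (drop p l))
      = (if p = 0 then b else a) * ?W [] l"
    using entries_weight_append[of a b "Min (set l)" "[]" "take p l" "drop p l"]
    by (simp add: new_entry)
  finally show ?thesis
    unfolding list_weight_eq_entries_weight Min_ins .
qed

lemma OmegaD:
  assumes "L \<in> Omega n k"
  shows "finite L" "card L = k" "\<And>l. l \<in> L \<Longrightarrow> l \<noteq> [] \<and> distinct l"
    "\<And>l m. l \<in> L \<Longrightarrow> m \<in> L \<Longrightarrow> l \<noteq> m \<Longrightarrow> set l \<inter> set m = {}"
    "(\<Union>l\<in>L. set l) = {1..n}"
  using assms by (auto simp: Omega_def)

lemma OmegaI:
  assumes "finite L" "card L = k" "\<And>l. l \<in> L \<Longrightarrow> l \<noteq> [] \<and> distinct l"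
    "\<And>l m. l \<in> L \<Longrightarrow> m \<in> L \<Longrightarrow> l \<noteq> m \<Longrightarrow> set l \<inter> set m = {}"
    "(\<Union>l\<in>L. set l) = {1..n}"
  shows "L \<in> Omega n k"
  using assms by (auto simp: Omega_def)

lemma Omega_0: "Omega 0 k = (if k = 0 then {{}} else {})"
proof -
  have "L = {}" if L: "L \<in> Omega 0 k" for L
  proof -
    have "set l = {}" if "l \<in> L" for l
      using OmegaD(5)[OF L] that by auto
    then show ?thesis
      using OmegaD(3)[OF L] by auto
  qed
  then show ?thesis
    by (auto simp: Omega_def)
qed

lemma Omega_Suc_0: "Omega (Suc n) 0 = {}"
  by (auto simp: Omega_def)

lemma Omega_block_le: "L \<in> Omega n k \<Longrightarrow> l \<in> L \<Longrightarrow> x \<in> set l \<Longrightarrow> x \<le> n"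
  using OmegaD(5) by fastforce

lemma Suc_notin_Omega_block: "L \<in> Omega n k \<Longrightarrow> l \<in> L \<Longrightarrow> Suc n \<notin> set l"
  using Omega_block_le by fastforce

lemma finite_Omega: "finite (Omega n k)"
proof -
  let ?lists = "{l. set l \<subseteq> {1..n} \<and> length l \<le> n}"
  have "L \<subseteq> ?lists" if "L \<in> Omega n k" for L
  proof
    fix l assume l: "l \<in> L"
    have sub: "set l \<subseteq> {1..n}"
      using OmegaD(5)[OF that] l by auto
    have "length l = card (set l)"
      using OmegaD(3)[OF that l] by (simp add: distinct_card)
    also have "\<dots> \<le> n"
      using card_mono[OF _ sub] by simp
    finally show "l \<in> ?lists"
      using sub by simp
  qed
  moreover have "finite ?lists"
    by (rule finite_lists_length_le) simp
  ultimately show ?thesis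
    by (meson PowI finite_Pow_iff finite_subset subsetI)
qed

lemma sum_length_Omega: "L \<in> Omega n k \<Longrightarrow> (\<Sum>l\<in>L. length l) = n"
proof -
  assume L: "L \<in> Omega n k"
  have "n = card (\<Union>l\<in>L. set l)"
    using OmegaD(5)[OF L] by simp
  also have "\<dots> = (\<Sum>l\<in>L. card (set l))"
    using OmegaD[OF L] by (intro card_UN_disjoint) auto
  also have "\<dots> = (\<Sum>l\<in>L. length l)"
    using OmegaD(3)[OF L] by (intro sum.cong) (auto simp: distinct_card)
  finally show ?thesis ..
qed

lemma Omega_insert_singleton:
  assumes L: "L \<in> Omega n k"
  shows "insert [Suc n] L \<in> Omega (Suc n) (Suc k)"
proof (rule OmegaI)
  have fresh: "Suc n \<notin> set l" if "l \<in> L" for l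
    using Suc_notin_Omega_block[OF L that] .
  then have "[Suc n] \<notin> L"
    by fastforce
  then show "finite (insert [Suc n] L)" "card (insert [Suc n] L) = Suc k"
    using OmegaD(1,2)[OF L] by simp_all
  show "l \<noteq> [] \<and> distinct l" if "l \<in> insert [Suc n] L" for l
    using that OmegaD(3)[OF L] by auto
  show "set l \<inter> set m = {}" if "l \<in> insert [Suc n] L" "m \<in> insert [Suc n] L" "l \<noteq> m" for l m
    using that fresh[of l] fresh[of m] OmegaD(4)[OF L, of l m] by auto
  show "(\<Union>l\<in>insert [Suc n] L. set l) = {1..Suc n}"
    using OmegaD(5)[OF L] by auto
qed

lemma Omega_remove_singleton:
  assumes L: "L \<in> Omega (Suc n) (Suc k)" and single: "[Suc n] \<in> L"
  shows "L - {[Suc n]} \<in> Omega n k"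
proof (rule OmegaI)
  show "finite (L - {[Suc n]})" "card (L - {[Suc n]}) = k"
    using OmegaD(1,2)[OF L] single by simp_all
  show "l \<noteq> [] \<and> distinct l" if "l \<in> L - {[Suc n]}" for l
    using that OmegaD(3)[OF L] by auto
  show "set l \<inter> set m = {}" if "l \<in> L - {[Suc n]}" "m \<in> L - {[Suc n]}" "l \<noteq> m" for l m
    using that OmegaD(4)[OF L, of l m] by auto
  have "(\<Union>l\<in>L - {[Suc n]}. set l) = (\<Union>l\<in>L. set l) - set [Suc n]"
    using OmegaD(4)[OF L] single by blast
  then show "(\<Union>l\<in>L - {[Suc n]}. set l) = {1..n}"
    using OmegaD(5)[OF L] by auto
qed

lemma replaced_block_notin:
  assumes L: "L \<in> Omega n k" and l: "l \<in> L" and "l' \<noteq> []"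
    and "set l' \<subseteq> set l \<union> X" "\<forall>m\<in>L. set m \<inter> X = {}"
  shows "l' \<notin> L - {l}"
proof
  assume "l' \<in> L - {l}"
  then have l': "l' \<in> L" "l' \<noteq> l"
    by simp_all
  have "set l' = set l' \<inter> (set l \<union> X)"
    using assms(4) by (simp add: Int_absorb1 Int_absorb2)
  also have "\<dots> = {}"
    using OmegaD(4)[OF L l'(1) l l'(2)] bspec[OF assms(5) l'(1)] by (simp add: Int_Un_distrib)
  finally show False
    using assms(3) by simp
qed

lemma Omega_replace_block:
  assumes L: "L \<in> Omega n k" and l: "l \<in> L" and "l' \<noteq> []" "distinct l'"
    and "set l' \<subseteq> set l \<union> X" "\<forall>m\<in>L. set m \<inter> X = {}"
    and "(\<Union>m\<in>L. set m) - set l \<union> set l' = {1..n'}"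
  shows "insert l' (L - {l}) \<in> Omega n' k"
proof (rule OmegaI)
  have notin: "l' \<notin> L - {l}"
    using replaced_block_notin[OF L l assms(3,5,6)] .
  show "finite (insert l' (L - {l}))"
    using OmegaD(1)[OF L] by simp
  have "card (insert l' (L - {l})) = Suc (card (L - {l}))"
    using OmegaD(1)[OF L] notin by (intro card_insert_disjoint) simp_all
  also have "\<dots> = k"
    using card.remove[OF OmegaD(1)[OF L] l] OmegaD(2)[OF L] by metis
  finally show "card (insert l' (L - {l})) = k" .
  show "m \<noteq> [] \<and> distinct m" if "m \<in> insert l' (L - {l})" for m
    using that assms(3,4) OmegaD(3)[OF L] by auto
  have new: "set m \<inter> set l' = {}" if "m \<in> L - {l}" for m
  proof -
    from that have m: "m \<in> L" "m \<noteq> l"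
      by simp_all
    have "set m \<inter> set l = {}"
      by (rule OmegaD(4)[OF L m(1) l m(2)])
    moreover have "set m \<inter> X = {}"
      using assms(6) m(1) by (rule bspec)
    ultimately show ?thesis
      using assms(5) by auto
  qed
  show "set m \<inter> set m' = {}" if "m \<in> insert l' (L - {l})" "m' \<in> insert l' (L - {l})" "m \<noteq> m'"
    for m m'
  proof (cases "m = l'")
    case True
    with that have "m' \<in> L - {l}"
      by simp
    with True show ?thesis
      using new[of m'] by (simp add: Int_commute)
  next
    case False
    with that have "m \<in> L - {l}"
      by simp
    then show ?thesis
      using that new[of m] OmegaD(4)[OF L, of m m'] by auto
  qed
  have "(\<Union>m\<in>L - {l}. set m) = (\<Union>m\<in>L. set m) - set l"
    using OmegaD(4)[OF L] l by blast
  then show "(\<Union>m\<in>insert l' (L - {l}). set m) = {1..n'}"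
    using assms(7) by auto
qed

text \<open>A partition of \<open>{1..Suc n}\<close> arises from one of \<open>{1..n}\<close> either by adding the singleton
  block \<open>[Suc n]\<close> or by inserting \<open>Suc n\<close> into a block \<open>l\<close> at a slot \<open>p \<le> length l\<close>.\<close>

definition slots :: "nat \<Rightarrow> nat \<Rightarrow> (nat list set \<times> nat list \<times> nat) set" where
  "slots n k = (SIGMA L:Omega n k. SIGMA l:L. {..length l})"

definition insert_max :: "nat \<Rightarrow> nat list set \<times> nat list \<times> nat \<Rightarrow> nat list set" where
  "insert_max n = (\<lambda>(L, l, p). insert (insert_at p (Suc n) l) (L - {l}))"

lemma finite_slots: "finite (slots n k)"
  unfolding slots_def using finite_Omega OmegaD(1) by (intro finite_SigmaI) auto

lemma insert_max_in_Omega: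
  assumes "(L, l, p) \<in> slots n k"
  shows "insert_max n (L, l, p) \<in> Omega (Suc n) k"
proof -
  from assms have L: "L \<in> Omega n k" and l: "l \<in> L"
    by (auto simp: slots_def)
  have fresh: "\<forall>m\<in>L. set m \<inter> {Suc n} = {}"
    using Suc_notin_Omega_block[OF L] by auto
  have "set l \<subseteq> {1..n}"
    using OmegaD(5)[OF L] l by auto
  then have union: "(\<Union>m\<in>L. set m) - set l \<union> set (insert_at p (Suc n) l) = {1..Suc n}"
    using OmegaD(5)[OF L] by (auto simp: set_insert_at)
  have "insert_at p (Suc n) l \<noteq> []" "set (insert_at p (Suc n) l) \<subseteq> set l \<union> {Suc n}"
    by (simp add: insert_at_def, simp add: set_insert_at)
  moreover have "distinct (insert_at p (Suc n) l)"
    using OmegaD(3)[OF L l] Suc_notin_Omega_block[OF L l] by (simp add: distinct_insert_at)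
  ultimately show ?thesis
    unfolding insert_max_def using Omega_replace_block[OF L l _ _ _ fresh union] by simp
qed

lemma Omega_in_image_insert_max:
  assumes L': "L' \<in> Omega (Suc n) k" and not_single: "[Suc n] \<notin> L'"
  shows "L' \<in> insert_max n ` slots n k"
proof -
  have "Suc n \<in> (\<Union>l\<in>L'. set l)"
    using OmegaD(5)[OF L'] by simp
  then obtain l0 where l0: "l0 \<in> L'" "Suc n \<in> set l0"
    by blast
  then obtain xs ys where l0_eq: "l0 = xs @ Suc n # ys"
    by (meson split_list)
  define l where "l = xs @ ys"
  have "distinct l0"
    using OmegaD(3)[OF L' l0(1)] by simp
  then have set_l: "set l = set l0 - {Suc n}" and distinct_l: "distinct l"
    by (auto simp: l_def l0_eq)
  have l_ne: "l \<noteq> []"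
    using not_single l0(1) by (auto simp: l_def l0_eq)
  have sub: "set l \<subseteq> set l0 \<union> {}"
    using set_l by auto
  have "set l0 \<subseteq> {1..Suc n}"
    using OmegaD(5)[OF L'] l0(1) by auto
  then have "(\<Union>m\<in>L'. set m) - set l0 \<union> set l = {1..Suc n} - {Suc n}"
    using OmegaD(5)[OF L'] set_l l0(2) by auto
  also have "\<dots> = {1..n}"
    by auto
  finally have "insert l (L' - {l0}) \<in> Omega n k"
    using Omega_replace_block[OF L' l0(1) l_ne distinct_l sub] by simp
  then have slot: "(insert l (L' - {l0}), l, length xs) \<in> slots n k"
    by (simp add: slots_def l_def)
  have "l \<notin> L' - {l0}"
    using replaced_block_notin[OF L' l0(1) l_ne sub] by simp
  then have "insert_max n (insert l (L' - {l0}), l, length xs) = insert l0 (L' - {l0})"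
    by (simp add: insert_max_def insert_at_def l_def l0_eq)
  also have "\<dots> = L'"
    using l0(1) by auto
  finally show ?thesis
    using slot by (intro image_eqI) simp_all
qed

lemma Omega_Suc_Suc_eq:
  "Omega (Suc n) (Suc k) = insert [Suc n] ` Omega n k \<union> insert_max n ` slots n (Suc k)"
proof (intro equalityI subsetI)
  fix L' assume L': "L' \<in> Omega (Suc n) (Suc k)"
  show "L' \<in> insert [Suc n] ` Omega n k \<union> insert_max n ` slots n (Suc k)"
  proof (cases "[Suc n] \<in> L'")
    case True
    then have "L' = insert [Suc n] (L' - {[Suc n]})"
      by auto
    moreover have "L' - {[Suc n]} \<in> Omega n k"
      using Omega_remove_singleton[OF L' True] .
    ultimately show ?thesis
      by (intro UnI1 image_eqI)
  next
    case False
    then show ?thesis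
      using Omega_in_image_insert_max[OF L'] by simp
  qed
next
  fix L' assume "L' \<in> insert [Suc n] ` Omega n k \<union> insert_max n ` slots n (Suc k)"
  then show "L' \<in> Omega (Suc n) (Suc k)"
    using Omega_insert_singleton insert_max_in_Omega by auto
qed

lemma insert_at_max_notin_Omega:
  "L \<in> Omega n k \<Longrightarrow> insert_at p (Suc n) l \<notin> L"
  using Suc_notin_Omega_block by (fastforce simp: set_insert_at)

lemma insert_singleton_disjoint_insert_max:
  "insert [Suc n] ` Omega n k \<inter> insert_max n ` slots n (Suc k) = {}"
proof -
  have "[Suc n] \<notin> insert_max n s" if slot: "s \<in> slots n (Suc k)" for s
  proof -
    obtain L l p where s: "s = (L, l, p)" and L: "L \<in> Omega n (Suc k)" and "l \<in> L" "p \<le> length l"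
      using slot by (cases s) (auto simp: slots_def)
    then have "insert_at p (Suc n) l \<noteq> [Suc n]"
      using OmegaD(3)[OF L] length_insert_at[of p l "Suc n"] by (cases l) auto
    moreover have "[Suc n] \<notin> L"
      using insert_at_max_notin_Omega[OF L, of 0 "[]"] by (simp add: insert_at_def)
    ultimately show ?thesis
      by (simp add: s insert_max_def)
  qed
  then show ?thesis
    by auto
qed

lemma inj_on_insert_singleton: "inj_on (insert [Suc n]) (Omega n k)"
  by (rule inj_onI) (metis insert_at_max_notin_Omega[of _ n k 0 "[]"] insert_ident insert_at_def
      append_Nil drop_0 take_0)

lemma inj_on_insert_max: "inj_on (insert_max n) (slots n k)"
proof (rule inj_onI)
  fix s1 s2 assume s1: "s1 \<in> slots n k" and s2: "s2 \<in> slots n k"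
    and eq: "insert_max n s1 = insert_max n s2"
  obtain L1 l1 p1 where s1_eq: "s1 = (L1, l1, p1)" and L1: "L1 \<in> Omega n k" "l1 \<in> L1" "p1 \<le> length l1"
    using s1 by (auto simp: slots_def)
  obtain L2 l2 p2 where s2_eq: "s2 = (L2, l2, p2)" and L2: "L2 \<in> Omega n k" "l2 \<in> L2" "p2 \<le> length l2"
    using s2 by (auto simp: slots_def)
  let ?i1 = "insert_at p1 (Suc n) l1" and ?i2 = "insert_at p2 (Suc n) l2"
  let ?L' = "insert_max n s1"
  have L': "?L' \<in> Omega (Suc n) k"
    using insert_max_in_Omega s1 s1_eq by simp
  \<comment> \<open>Both new blocks are the unique block of \<open>?L'\<close> containing \<open>Suc n\<close>.\<close>
  have "?i1 \<in> ?L'"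
    by (simp add: s1_eq insert_max_def)
  moreover have "?i2 \<in> ?L'"
    unfolding eq by (simp add: s2_eq insert_max_def)
  moreover have "Suc n \<in> set ?i1 \<inter> set ?i2"
    by (simp add: set_insert_at)
  ultimately have "?i1 = ?i2"
    using OmegaD(4)[OF L'] by blast
  then have l: "p1 = p2 \<and> l1 = l2"
    using insert_at_inj Suc_notin_Omega_block L1 L2 by metis
  have "L1 - {l1} = ?L' - {?i1}"
    using insert_at_max_notin_Omega[OF L1(1)] by (auto simp: s1_eq insert_max_def)
  also have "\<dots> = L2 - {l2}"
    unfolding eq \<open>?i1 = ?i2\<close> using insert_at_max_notin_Omega[OF L2(1)]
    by (auto simp: s2_eq insert_max_def)
  finally have "L1 = L2"
    using L1(2) L2(2) l by (metis insert_Diff)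
  with l show "s1 = s2"
    by (simp add: s1_eq s2_eq)
qed

lemma weight_insert_singleton:
  "L \<in> Omega n k \<Longrightarrow> weight a b (insert [Suc n] L) = weight a b L"
  using insert_at_max_notin_Omega[of L n k 0 "[]"] OmegaD(1)[of L n k]
  by (simp add: weight_eq_prod_list_weight list_weight_singleton insert_at_def)

lemma weight_insert_max:
  assumes "(L, l, p) \<in> slots n k"
  shows "weight a b (insert_max n (L, l, p)) = (if p = 0 then b else a) * weight a b L"
proof -
  from assms have L: "L \<in> Omega n k" and l: "l \<in> L" and p: "p \<le> length l"
    by (auto simp: slots_def)
  have "weight a b (insert_max n (L, l, p))
      = list_weight a b (insert_at p (Suc n) l) * (\<Prod>m\<in>L - {l}. list_weight a b m)"
    using insert_at_max_notin_Omega[OF L] OmegaD(1)[OF L]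
    by (simp add: insert_max_def weight_eq_prod_list_weight)
  also have "list_weight a b (insert_at p (Suc n) l) = (if p = 0 then b else a) * list_weight a b l"
    using Omega_block_le[OF L l] OmegaD(3)[OF L l] p
    by (intro list_weight_insert_at_max) (auto simp: less_Suc_eq_le)
  finally show ?thesis
    using prod.remove[OF OmegaD(1)[OF L] l, of "list_weight a b"]
    by (simp add: weight_eq_prod_list_weight)
qed

lemma sum_slot_factors:
  assumes L: "L \<in> Omega n k"
  shows "(\<Sum>(l, p)\<in>(SIGMA l:L. {..length l}). if p = 0 then b else a) = of_nat k * b + of_nat n * a"
proof -
  have slot_sum: "(\<Sum>p\<le>m. if p = 0 then b else a) = b + of_nat m * a" for m
    by (induction m) (auto simp: algebra_simps)
  have "(\<Sum>(l, p)\<in>(SIGMA l:L. {..length l}). if p = 0 then b else a)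
      = (\<Sum>l\<in>L. b + of_nat (length l) * a)"
    using OmegaD(1)[OF L] by (simp add: sum.Sigma[symmetric] slot_sum)
  also have "\<dots> = of_nat (card L) * b + of_nat (\<Sum>l\<in>L. length l) * a"
    by (simp add: sum.distrib sum_distrib_right)
  finally show ?thesis
    using OmegaD(2)[OF L] sum_length_Omega[OF L] by simp
qed

lemma sum_weight_insert_max:
  "(\<Sum>s\<in>slots n k. weight a b (insert_max n s))
     = (of_nat k * b + of_nat n * a) * (\<Sum>L\<in>Omega n k. weight a b L)"
proof -
  have "(\<Sum>s\<in>slots n k. weight a b (insert_max n s))
      = (\<Sum>L\<in>Omega n k. \<Sum>(l, p)\<in>(SIGMA l:L. {..length l}). (if p = 0 then b else a) * weight a b L)"
    unfolding slots_def using finite_Omega OmegaD(1)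
    by (subst sum.Sigma) (auto intro!: sum.cong simp: weight_insert_max[unfolded slots_def])
  also have "\<dots> = (\<Sum>L\<in>Omega n k. (of_nat k * b + of_nat n * a) * weight a b L)"
  proof (intro sum.cong refl)
    fix L assume "L \<in> Omega n k"
    then show "(\<Sum>(l, p)\<in>(SIGMA l:L. {..length l}). (if p = 0 then b else a) * weight a b L)
        = (of_nat k * b + of_nat n * a) * weight a b L"
      using sum_slot_factors[of L n k b a] by (simp add: sum_distrib_right[symmetric] case_prod_unfold)
  qed
  finally show ?thesis
    by (simp add: sum_distrib_left)
qed

lemma sum_weight_Omega_Suc_Suc:
  "(\<Sum>L\<in>Omega (Suc n) (Suc k). weight a b L) =
     (\<Sum>L\<in>Omega n k. weight a b L) +
     (of_nat (Suc k) * b + of_nat n * a) * (\<Sum>L\<in>Omega n (Suc k). weight a b L)"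
proof -
  have "(\<Sum>L\<in>Omega (Suc n) (Suc k). weight a b L)
      = (\<Sum>L\<in>insert [Suc n] ` Omega n k. weight a b L) + (\<Sum>L\<in>insert_max n ` slots n (Suc k). weight a b L)"
    unfolding Omega_Suc_Suc_eq
    by (intro sum.union_disjoint finite_imageI finite_Omega finite_slots
        insert_singleton_disjoint_insert_max)
  also have "\<dots> = (\<Sum>L\<in>Omega n k. weight a b L) + (\<Sum>s\<in>slots n (Suc k). weight a b (insert_max n s))"
    by (simp add: sum.reindex inj_on_insert_singleton inj_on_insert_max weight_insert_singleton)
  finally show ?thesis
    by (simp add: sum_weight_insert_max)
qed

lemma sum_weight_Omega_eq_gen_stirling_rec:
  "(\<Sum>L\<in>Omega n k. weight a b L) = gen_stirling_rec a b n k"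
proof (induction n arbitrary: k)
  case 0
  then show ?case by (simp add: Omega_0 weight_def)
next
  case (Suc n)
  then show ?case
    by (cases k) (simp_all add: Omega_Suc_0 sum_weight_Omega_Suc_Suc)
qed

theorem theorem1:
  fixes \<alpha> \<beta> :: complex and n k :: nat
  shows "gen_stirling \<alpha> \<beta> n k = (\<Sum>L\<in>Omega n k. weight \<alpha> \<beta> L)"
  by (simp add: gen_stirling_eq_rec sum_weight_Omega_eq_gen_stirling_rec)

end
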